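(* For every $k\in\mathbb N$, $$\frac{E(u_{k+1})}{\|u_{k+1}\|_{L^{n+1}(\Omega,\mu)}}\le\frac{E(u_k)}{\|u_k\|_{L^{n+1}(\Omega,\mu)}},$$ equivalently $R(u_{k+1})\|u_{k+1}\|^n_{L^{n+1}(\Omega,\mu)}\le R(u_k)\|u_k\|^n_{L^{n+1}(\Omega,\mu)}$.
   Context: $\Omega\Subset\mathbb C^n$ bounded strictly pseudoconvex, $0<f\in C^\infty(\bar\Omega)$, $dV$ Euclidean volume form, $\mu=f\,dV$, $dd^c=i\partial\bar\partial$, $(dd^c u)^n$ the complex Monge–Ampère measure. For a bounded negative plurisubharmonic $\phi\not\equiv0$ with $\int_\Omega(dd^c\phi)^n<\infty$: $E(\phi)=\frac1{n+1}\int_\Omega(-\phi)(dd^c\phi)^n$, $I_\mu(\phi)=\frac1{n+1}\int_\Omega(-\phi)^{n+1}d\mu=\frac1{n+1}\|\phi\|^{n+1}_{L^{n+1}(\Omega,\mu)}$, $R(\phi)=E(\phi)/I_\mu(\phi)$. The sequence $(u_k)$: $u_0\in PSH(\Omega)\cap C^{0,1}(\bar\Omega)$ with $(dd^cu_0)^n\ge f\,dV$, $u_0\le0$ on $\partial\Omega$, $\int_\Omega(dd^cu_0)^n<\infty$; and $u_{k+1}\in PSH(\Omega)\cap C^0(\bar\Omega)$ is the unique solution of $(dd^cu_{k+1})^n=R(u_k)(-u_k)^nf\,dV$ on $\Omega$, $u_{k+1}=0$ on $\partial\Omega$. *)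

theory Defs
  imports "HOL-Analysis.Analysis"
begin

text \<open>Points of C^n are vectors of type complex^'n, n = CARD('n).
  Iterated directional (Frechet) derivatives: dd [v1,...,vk] u = d_v1 ... d_vk u.\<close>

fun dd :: "('a::real_normed_vector) list \<Rightarrow> ('a \<Rightarrow> real) \<Rightarrow> 'a \<Rightarrow> real" where
  "dd [] u = u"
| "dd (v # vs) u = (\<lambda>x. frechet_derivative (dd vs u) (at x) v)"

definition C2_on :: "'a::real_normed_vector set \<Rightarrow> ('a \<Rightarrow> real) \<Rightarrow> bool" where
  "C2_on U u \<longleftrightarrow> (\<forall>vs. length vs \<le> 2 \<longrightarrow>
      continuous_on U (dd vs u) \<and> (length vs < 2 \<longrightarrow> (\<forall>x\<in>U. dd vs u differentiable (at x))))"

definition smooth_on :: "'a::real_normed_vector set \<Rightarrow> ('a \<Rightarrow> real) \<Rightarrow> bool" where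
  "smooth_on U u \<longleftrightarrow> (\<forall>vs. continuous_on U (dd vs u) \<and> (\<forall>x\<in>U. dd vs u differentiable (at x)))"

text \<open>Complex Hessian u_{j kbar} = d^2 u / (dz_j dzbar_k) at x.\<close>
definition cHess :: "(complex^'n \<Rightarrow> real) \<Rightarrow> complex^'n \<Rightarrow> complex^'n^'n" where
  "cHess u x = (\<chi> j k. (1/4) * (complex_of_real (dd [axis j 1, axis k 1] u x)
      + complex_of_real (dd [axis j \<i>, axis k \<i>] u x)
      + \<i> * (complex_of_real (dd [axis j 1, axis k \<i>] u x) - complex_of_real (dd [axis j \<i>, axis k 1] u x))))"

text \<open>Density of (dd^c u)^n = (i ddbar u)^n w.r.t. Euclidean volume, for C^2 u:
  (i ddbar u)^n = 2^n n! det(u_{j kbar}) dV.\<close>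
definition MA_density :: "(complex^'n \<Rightarrow> real) \<Rightarrow> complex^'n \<Rightarrow> real" where
  "MA_density u x = 2 ^ CARD('n) * fact CARD('n) * Re (det (cHess u x))"

definition psh :: "(complex^'n) set \<Rightarrow> (complex^'n \<Rightarrow> real) \<Rightarrow> bool" where
  "psh \<Omega> u \<longleftrightarrow>
     (\<forall>x\<in>\<Omega>. \<forall>e>0. \<exists>d>0. \<forall>y\<in>\<Omega>. dist y x < d \<longrightarrow> u y < u x + e) \<and>
     (\<forall>a b. (\<forall>z. cmod z \<le> 1 \<longrightarrow> a + z *s b \<in> \<Omega>) \<longrightarrow>
        (\<lambda>t. u (a + cis t *s b)) integrable_on {0..2*pi} \<and>
        u a \<le> integral {0..2*pi} (\<lambda>t. u (a + cis t *s b)) / (2*pi))"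

definition strictly_pseudoconvex :: "(complex^'n) set \<Rightarrow> bool" where
  "strictly_pseudoconvex \<Omega> \<longleftrightarrow> open \<Omega> \<and> bounded \<Omega> \<and>
     (\<exists>U \<rho>. open U \<and> closure \<Omega> \<subseteq> U \<and> C2_on U \<rho> \<and> \<Omega> = {z\<in>U. \<rho> z < 0} \<and>
        (\<forall>z\<in>frontier \<Omega>. frechet_derivative \<rho> (at z) \<noteq> (\<lambda>v. 0)) \<and>
        (\<forall>z\<in>U. \<forall>w. w \<noteq> 0 \<longrightarrow>
            Re (\<Sum>j\<in>UNIV. \<Sum>k\<in>UNIV. cHess \<rho> z $ j $ k * w $ j * cnj (w $ k)) > 0))"

text \<open>nu is the complex Monge-Ampere measure (dd^c u)^n of the continuous psh function u on
  the open set Omega (Bedford-Taylor): a Borel measure carried by Omega, finite on compacts of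
  Omega, and the weak limit of (dd^c v_j)^n dV for every sequence of C^2 psh v_j converging
  locally uniformly to u on any open U contained in Omega (tested on C_c(U)).\<close>
definition MA_measure :: "(complex^'n) set \<Rightarrow> (complex^'n \<Rightarrow> real) \<Rightarrow> (complex^'n) measure \<Rightarrow> bool" where
  "MA_measure \<Omega> u \<nu> \<longleftrightarrow> sets \<nu> = sets lborel \<and> emeasure \<nu> (UNIV - \<Omega>) = 0 \<and>
     (\<forall>K. compact K \<and> K \<subseteq> \<Omega> \<longrightarrow> emeasure \<nu> K < \<infinity>) \<and>
     (\<forall>U v \<phi>. open U \<and> U \<subseteq> \<Omega> \<and> (\<forall>j. C2_on U (v j) \<and> psh U (v j)) \<and>
        (\<forall>K. compact K \<and> K \<subseteq> U \<longrightarrow> uniform_limit K v u sequentially) \<and>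
        continuous_on UNIV \<phi> \<and> compact (closure {z. \<phi> z \<noteq> 0}) \<and> closure {z. \<phi> z \<noteq> 0} \<subseteq> U
        \<longrightarrow> ((\<lambda>j. LINT z|lborel. \<phi> z * MA_density (v j) z) \<longlonglongrightarrow> (LINT z|\<nu>. \<phi> z)))"

text \<open>E(phi) = 1/(n+1) int (-phi) (dd^c phi)^n, with nu = (dd^c phi)^n.\<close>
definition energy :: "(complex^'n) measure \<Rightarrow> (complex^'n \<Rightarrow> real) \<Rightarrow> real" where
  "energy \<nu> \<phi> = (1 / (real CARD('n) + 1)) * (LINT z|\<nu>. - \<phi> z)"

text \<open>I_mu(phi) with mu = f dV on Omega.\<close>
definition I_mu :: "(complex^'n) set \<Rightarrow> (complex^'n \<Rightarrow> real) \<Rightarrow> (complex^'n \<Rightarrow> real) \<Rightarrow> real" where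
  "I_mu \<Omega> f \<phi> = (1 / (real CARD('n) + 1)) *
     (LINT z|lborel. indicator \<Omega> z * (- \<phi> z) ^ (CARD('n) + 1) * f z)"

definition Lnorm :: "(complex^'n) set \<Rightarrow> (complex^'n \<Rightarrow> real) \<Rightarrow> (complex^'n \<Rightarrow> real) \<Rightarrow> real" where
  "Lnorm \<Omega> f \<phi> = (LINT z|lborel. indicator \<Omega> z * \<bar>\<phi> z\<bar> ^ (CARD('n) + 1) * f z)
       powr (1 / (real CARD('n) + 1))"

end

theory Submission
  imports Defs
begin

(* By the maximum principle for plurisubharmonic functions every iterate is nonpositive on \<Omega>,
   so the energies are nonnegative and I_mu(u_k) = |u_k|^(n+1) / (n+1), writing |.| for the
   L^(n+1)(\<Omega>, mu) norm.  Since (dd^c u_(k+1))^n = R(u_k) (-u_k)^n mu, Hoelder's inequality with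
   exponents (n+1)/n and n+1 gives
     (n+1) E(u_(k+1)) <= R(u_k) |u_k|^n |u_(k+1)| = (n+1) E(u_k) |u_(k+1)| / |u_k|. *)

lemma continuous_on_smooth_extension:
  assumes "S \<subseteq> V" "smooth_on V g" "\<And>z. z \<in> S \<Longrightarrow> g z = f z"
  shows "continuous_on S f"
proof -
  have "continuous_on S g"
    using assms unfolding smooth_on_def by (metis dd.simps(1) continuous_on_subset)
  then show ?thesis
    using assms(3) continuous_on_eq by blast
qed

lemma norm_axis: "norm (axis i x :: 'a::real_inner^'n) = norm x"
  by (simp add: norm_eq_sqrt_inner inner_axis_axis)

lemma integral_less_bound_on_subinterval:
  fixes h :: "real \<Rightarrow> real"
  assumes "a < c" "c \<le> b" and cont: "continuous_on {a..b} h"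
    and le: "\<And>t. t \<in> {a..b} \<Longrightarrow> h t \<le> M"
    and less: "\<And>t. t \<in> {a<..<c} \<Longrightarrow> h t < M"
  shows "integral {a..b} h < M * (b - a)"
proof -
  have int: "h integrable_on {a..b}"
    using cont integrable_continuous_interval by blast
  have "integral {a..c} h < integral {a..c} (\<lambda>_. M)"
    using assms by (intro integral_less_real) (auto intro: continuous_on_subset)
  moreover have "integral {c..b} h \<le> integral {c..b} (\<lambda>_. M)"
    using assms int by (intro integral_le integrable_on_subinterval[OF int]) auto
  moreover have "integral {a..c} h + integral {c..b} h = integral {a..b} h"
    using assms int by (intro Henstock_Kurzweil_Integration.integral_combine) auto
  ultimately show ?thesis
    using assms by (simp add: algebra_simps)
qed

lemma psh_max_attained_further:
  fixes u :: "complex^'n \<Rightarrow> real"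
  assumes "open \<Omega>" and psh: "psh \<Omega> u" and cont: "continuous_on \<Omega> u" and "a \<in> \<Omega>"
    and max: "\<And>y. y \<in> \<Omega> \<Longrightarrow> u y \<le> u a"
  shows "\<exists>y\<in>\<Omega>. u y = u a \<and> Re (a $ j) < Re (y $ j)"
proof (rule ccontr)
  (* Otherwise u < u a on the arc 0 < t < 1 of the circle through a in direction e_j, so the
     circle mean of u falls below u a. *)
  assume none: "\<not> ?thesis"
  obtain r where "r > 0" and ball: "ball a r \<subseteq> \<Omega>"
    using assms openE by blast
  define b :: "complex^'n" where "b = axis j (complex_of_real (r/2))"
  have disc: "a + z *s b \<in> \<Omega>" if "cmod z \<le> 1" for z
  proof -
    have "z *s b = axis j (z * complex_of_real (r/2))"
      by (simp add: b_def vec_eq_iff axis_def)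
    then have "norm (z *s b) = cmod z * (r/2)"
      using \<open>r > 0\<close> by (simp add: norm_axis norm_mult)
    also have "\<dots> < r"
      using that \<open>r > 0\<close> mult_right_mono[of "cmod z" 1 "r/2"] by linarith
    finally show ?thesis
      using ball by (auto simp: dist_norm)
  qed
  define h where "h t = u (a + cis t *s b)" for t
  have circle: "continuous_on UNIV (\<lambda>t. a + cis t *s b)"
    unfolding vector_scalar_mult_def by (intro continuous_intros)
  then have "continuous_on {0..2*pi} h"
    unfolding h_def using disc
    by (intro continuous_on_compose2[OF cont continuous_on_subset[OF circle]]) auto
  moreover have "h t < u a" if "t \<in> {0<..<1}" for t
  proof -
    have "cos t > 0"
      using that pi_gt3 by (intro cos_gt_zero_pi) auto
    then have "Re (a $ j) < Re ((a + cis t *s b) $ j)"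
      using \<open>r > 0\<close> by (simp add: b_def)
    moreover have "a + cis t *s b \<in> \<Omega>"
      using disc by simp
    ultimately have "u (a + cis t *s b) \<noteq> u a"
      using none by blast
    then show ?thesis
      using max[OF \<open>a + cis t *s b \<in> \<Omega>\<close>] by (simp add: h_def)
  qed
  ultimately have "integral {0..2*pi} h < u a * (2*pi - 0)"
    using max disc pi_gt3 by (intro integral_less_bound_on_subinterval[where c=1]) (auto simp: h_def)
  moreover have "u a \<le> integral {0..2*pi} h / (2*pi)"
    using psh disc unfolding psh_def h_def by blast
  ultimately show False
    by (simp add: field_simps)
qed

lemma psh_maximum_principle:
  fixes u :: "complex^'n \<Rightarrow> real"
  assumes "bounded \<Omega>" "open \<Omega>" "psh \<Omega> u" and cont: "continuous_on (closure \<Omega>) u"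
    and frontier: "\<And>z. z \<in> frontier \<Omega> \<Longrightarrow> u z \<le> c" and "x \<in> \<Omega>"
  shows "u x \<le> c"
proof (rule ccontr)
  assume "\<not> u x \<le> c"
  obtain m where "m \<in> closure \<Omega>" and max: "\<And>y. y \<in> closure \<Omega> \<Longrightarrow> u y \<le> u m"
    using continuous_attains_sup[OF _ _ cont] assms closure_subset
    by (metis compact_closure empty_iff subsetD)
  define S where "S = {z \<in> closure \<Omega>. u z = u m}"
  have "closed S"
    unfolding S_def by (rule continuous_closed_preimage_constant[OF cont]) simp
  then have "compact S"
    using bounded_subset[OF bounded_closure[OF \<open>bounded \<Omega>\<close>]]
    by (auto simp: compact_eq_bounded_closed S_def)
  have "c < u m"
    using max[of x] closure_subset[of \<Omega>] \<open>x \<in> \<Omega>\<close> \<open>\<not> u x \<le> c\<close> by auto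
  then have "S \<subseteq> \<Omega>"
    using frontier by (force simp: S_def closure_Un_frontier)
  define j :: 'n where "j = undefined" \<comment> \<open>any coordinate will do\<close>
  have "m \<in> S"
    using \<open>m \<in> closure \<Omega>\<close> by (simp add: S_def)
  moreover have "continuous_on S (\<lambda>y. Re (y $ j))"
    by (intro continuous_intros)
  ultimately obtain a where "a \<in> S" and a_max: "\<And>y. y \<in> S \<Longrightarrow> Re (y $ j) \<le> Re (a $ j)"
    using continuous_attains_sup[OF \<open>compact S\<close>] by blast
  moreover have "continuous_on \<Omega> u"
    using cont closure_subset continuous_on_subset by blast
  moreover have "\<And>y. y \<in> \<Omega> \<Longrightarrow> u y \<le> u a"
    using max \<open>a \<in> S\<close> closure_subset by (auto simp: S_def)
  ultimately obtain y where "y \<in> \<Omega>" "u y = u a" "Re (a $ j) < Re (y $ j)"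
    using psh_max_attained_further[of \<Omega> u a] assms \<open>S \<subseteq> \<Omega>\<close> by blast
  then have "y \<in> S"
    using \<open>a \<in> S\<close> closure_subset by (auto simp: S_def)
  then show False
    using a_max \<open>Re (a $ j) < Re (y $ j)\<close> by force
qed

lemma powr_inverse_power:
  fixes x :: real
  assumes "0 \<le> x"
  shows "(x powr (1 / (real n + 1))) ^ (n + 1) = x"
proof -
  have "(x powr (1 / (real n + 1))) ^ (n + 1) = (x powr (1 / (real n + 1))) powr real (n + 1)"
    by (rule powr_realpow'[symmetric]) auto
  also have "\<dots> = x"
    using assms by (simp add: powr_powr add.commute)
  finally show ?thesis .
qed

lemma Youngs_inequality_nat:
  fixes x y :: real
  assumes "0 \<le> x" "0 \<le> y"
  shows "x ^ n * y \<le> (real n * x ^ (n+1) + y ^ (n+1)) / (real n + 1)"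
proof (cases "n = 0")
  case False
  define N where "N = real n + 1"
  have pow_N: "z powr N = z ^ (n+1)" if "0 \<le> z" for z
    using powr_realpow'[of z "n+1"] that by (simp add: N_def add.commute)
  have "x ^ n * y \<le> (x ^ n) powr (N / n) / (N / n) + y powr N / N"
    using assms False by (intro Youngs_inequality) (auto simp: N_def field_simps)
  also have "(x ^ n) powr (N / n) = x powr N"
    using assms False by (simp add: powr_powr flip: powr_realpow')
  also have "x powr N / (N / n) + y powr N / N = (real n * x ^ (n+1) + y ^ (n+1)) / N"
    unfolding pow_N[OF assms(1)] pow_N[OF assms(2)] by (simp add: add_divide_distrib)
  finally show ?thesis
    by (simp only: N_def)
qed simp

lemma Holder_inequality_nat:
  fixes w F G :: "'a \<Rightarrow> real"
  assumes "\<And>x. 0 \<le> w x" "\<And>x. 0 \<le> F x" "\<And>x. 0 \<le> G x"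
    and "0 < \<alpha>" "0 < \<beta>"
    and \<alpha>: "\<alpha> ^ (n+1) = (LINT x|M. w x * F x ^ (n+1))"
    and \<beta>: "\<beta> ^ (n+1) = (LINT x|M. w x * G x ^ (n+1))"
  shows "(LINT x|M. w x * F x ^ n * G x) \<le> \<alpha> ^ n * \<beta>"
proof (cases "integrable M (\<lambda>x. w x * F x ^ n * G x)")
  case False
  then show ?thesis
    using assms by (simp add: not_integrable_integral_eq)
next
  case True
  have iF: "integrable M (\<lambda>x. w x * F x ^ (n+1))"
    using \<alpha> \<open>0 < \<alpha>\<close> not_integrable_integral_eq by fastforce
  have iG: "integrable M (\<lambda>x. w x * G x ^ (n+1))"
    using \<beta> \<open>0 < \<beta>\<close> not_integrable_integral_eq by fastforce
  define N where "N = real n + 1"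
  have "0 < N"
    by (simp add: N_def)
  have pointwise: "w x * F x ^ n * G x / (\<alpha> ^ n * \<beta>) \<le>
      real n / N * (w x * F x ^ (n+1)) / \<alpha> ^ (n+1) + 1 / N * (w x * G x ^ (n+1)) / \<beta> ^ (n+1)" for x
  proof -
    have "w x * ((F x / \<alpha>) ^ n * (G x / \<beta>))
        \<le> w x * ((real n * (F x / \<alpha>) ^ (n+1) + (G x / \<beta>) ^ (n+1)) / N)"
      using Youngs_inequality_nat[of "F x / \<alpha>" "G x / \<beta>" n] assms
      by (intro mult_left_mono) (auto simp: N_def)
    then show ?thesis
      using \<open>0 < \<alpha>\<close> \<open>0 < \<beta>\<close> \<open>0 < N\<close> by (simp add: power_divide field_simps)
  qed
  have "(LINT x|M. w x * F x ^ n * G x) / (\<alpha> ^ n * \<beta>) = (LINT x|M. w x * F x ^ n * G x / (\<alpha> ^ n * \<beta>))"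
    by simp
  also have "\<dots> \<le> (LINT x|M. real n / N * (w x * F x ^ (n+1)) / \<alpha> ^ (n+1)
      + 1 / N * (w x * G x ^ (n+1)) / \<beta> ^ (n+1))"
    using True iF iG pointwise by (intro integral_mono) auto
  also have "\<dots> = real n / N * (LINT x|M. w x * F x ^ (n+1)) / \<alpha> ^ (n+1)
      + 1 / N * (LINT x|M. w x * G x ^ (n+1)) / \<beta> ^ (n+1)"
    using iF iG by simp
  also have "\<dots> = real n / N * \<alpha> ^ (n+1) / \<alpha> ^ (n+1) + 1 / N * \<beta> ^ (n+1) / \<beta> ^ (n+1)"
    by (simp only: \<alpha> \<beta>)
  also have "\<dots> = real n / N + 1 / N"
    using \<open>0 < \<alpha>\<close> \<open>0 < \<beta>\<close> by simp
  also have "\<dots> = 1"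
    by (simp add: N_def field_simps)
  finally show ?thesis
    using \<open>0 < \<alpha>\<close> \<open>0 < \<beta>\<close> by (simp add: divide_le_eq)
qed

lemma energy_nonneg:
  fixes \<nu> :: "(complex^'n) measure"
  assumes "sets \<nu> = sets lborel" "\<Omega> \<in> sets lborel" "emeasure \<nu> (UNIV - \<Omega>) = 0"
    and "\<And>z. z \<in> \<Omega> \<Longrightarrow> \<phi> z \<le> 0"
  shows "0 \<le> energy \<nu> \<phi>"
proof -
  have "UNIV - \<Omega> \<in> null_sets \<nu>"
    using assms by (auto simp: null_sets_def)
  then have "AE z in \<nu>. z \<in> \<Omega>"
    using sets_eq_imp_space_eq[OF assms(1)] by (intro AE_I') auto
  then have "0 \<le> (LINT z|\<nu>. - \<phi> z)"
    using assms(4) by (intro integral_nonneg_AE) auto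
  then show ?thesis
    unfolding energy_def by (simp add: divide_nonpos_nonneg)
qed

lemma energy_density_le:
  fixes d \<phi> :: "complex^'n \<Rightarrow> real"
  assumes d: "d \<in> borel_measurable M" "\<And>z. 0 \<le> d z"
  shows "energy (density M (\<lambda>z. ennreal (d z))) \<phi> \<le> (LINT z|M. d z * \<bar>\<phi> z\<bar>) / (real CARD('n) + 1)"
proof (cases "integrable (density M (\<lambda>z. ennreal (d z))) (\<lambda>z. - \<phi> z)")
  case True
  then have "(\<lambda>z. - \<phi> z) \<in> borel_measurable M"
    using borel_measurable_integrable measurable_density_eq1 by blast
  then have \<phi>: "\<phi> \<in> borel_measurable M"
    using borel_measurable_uminus_eq by blast
  have "integrable M (\<lambda>z. d z * - \<phi> z)"
    using True d \<phi> by (simp add: integrable_density)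
  moreover from integrable_abs[OF this] have "integrable M (\<lambda>z. d z * \<bar>\<phi> z\<bar>)"
    using d by (simp add: abs_mult)
  moreover have "d z * - \<phi> z \<le> d z * \<bar>\<phi> z\<bar>" for z
    using d by (intro mult_left_mono) auto
  ultimately have "(LINT z|M. d z * - \<phi> z) \<le> (LINT z|M. d z * \<bar>\<phi> z\<bar>)"
    by (intro integral_mono)
  moreover have "(LINT z|density M (\<lambda>z. ennreal (d z)). - \<phi> z) = (LINT z|M. d z * - \<phi> z)"
    using d \<phi> by (simp add: integral_density)
  ultimately have "(LINT z|density M (\<lambda>z. ennreal (d z)). - \<phi> z) \<le> (LINT z|M. d z * \<bar>\<phi> z\<bar>)"
    by simp
  from divide_right_mono[OF this, of "real CARD('n) + 1"] show ?thesis
    by (simp add: energy_def)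
next
  case False
  have "0 \<le> (LINT z|M. d z * \<bar>\<phi> z\<bar>)"
    using d by (intro integral_nonneg_AE) auto
  with False show ?thesis
    by (simp add: energy_def not_integrable_integral_eq)
qed

lemma Lnorm_nonneg: "0 \<le> Lnorm \<Omega> f \<phi>"
  by (simp add: Lnorm_def)

lemma Lnorm_power:
  fixes \<Omega> :: "(complex^'n) set"
  assumes "\<And>z. z \<in> \<Omega> \<Longrightarrow> 0 \<le> f z"
  shows "Lnorm \<Omega> f \<phi> ^ (CARD('n) + 1)
    = (LINT z|lborel. (indicator \<Omega> z * f z) * \<bar>\<phi> z\<bar> ^ (CARD('n) + 1))"
proof -
  have A: "0 \<le> (LINT z|lborel. indicator \<Omega> z * \<bar>\<phi> z\<bar> ^ (CARD('n) + 1) * f z)"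
    using assms by (intro integral_nonneg_AE AE_I2) (auto simp: indicator_def)
  show ?thesis
    unfolding Lnorm_def powr_inverse_power[OF A] by (simp add: ac_simps)
qed

lemma I_mu_eq_Lnorm_power:
  fixes \<Omega> :: "(complex^'n) set"
  assumes "\<And>z. z \<in> \<Omega> \<Longrightarrow> 0 \<le> f z" and "\<And>z. z \<in> \<Omega> \<Longrightarrow> \<phi> z \<le> 0"
  shows "I_mu \<Omega> f \<phi> = Lnorm \<Omega> f \<phi> ^ (CARD('n) + 1) / (real CARD('n) + 1)"
proof -
  have integrand: "(\<lambda>z. indicator \<Omega> z * (- \<phi> z) ^ (CARD('n) + 1) * f z)
      = (\<lambda>z. (indicator \<Omega> z * f z) * \<bar>\<phi> z\<bar> ^ (CARD('n) + 1))"
    using assms(2) by (force simp: abs_of_nonpos indicator_def)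
  have "I_mu \<Omega> f \<phi>
      = (LINT z|lborel. (indicator \<Omega> z * f z) * \<bar>\<phi> z\<bar> ^ (CARD('n) + 1)) / (real CARD('n) + 1)"
    unfolding I_mu_def integrand by simp
  then show ?thesis
    by (simp only: Lnorm_power[OF assms(1)])
qed

lemma energy_density_le_Lnorm:
  fixes \<Omega> :: "(complex^'n) set" and f v w :: "complex^'n \<Rightarrow> real"
  assumes "open \<Omega>" "continuous_on \<Omega> f" "continuous_on \<Omega> v"
    and f: "\<And>z. z \<in> \<Omega> \<Longrightarrow> 0 \<le> f z" and v: "\<And>z. z \<in> \<Omega> \<Longrightarrow> v z \<le> 0" and "0 \<le> c"
    and "0 < Lnorm \<Omega> f v" "0 < Lnorm \<Omega> f w"
  shows "energy (density lborel (\<lambda>z. ennreal (indicator \<Omega> z * c * (- v z) ^ CARD('n) * f z))) w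
    \<le> c * (Lnorm \<Omega> f v ^ CARD('n) * Lnorm \<Omega> f w) / (real CARD('n) + 1)"
proof -
  define d where "d z = indicator \<Omega> z * c * (- v z) ^ CARD('n) * f z" for z
  have "(\<lambda>z. indicator \<Omega> z *\<^sub>R (c * (- v z) ^ CARD('n) * f z)) \<in> borel_measurable borel"
    using assms by (intro borel_measurable_continuous_on_indicator continuous_intros) auto
  then have "d \<in> borel_measurable lborel"
    by (simp add: d_def[abs_def] mult.assoc)
  moreover have "0 \<le> d z" for z
    using assms by (auto simp: d_def indicator_def)
  ultimately have "energy (density lborel (\<lambda>z. ennreal (d z))) w
      \<le> (LINT z|lborel. d z * \<bar>w z\<bar>) / (real CARD('n) + 1)"
    by (rule energy_density_le)
  also have "(LINT z|lborel. d z * \<bar>w z\<bar>)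
      = c * (LINT z|lborel. (indicator \<Omega> z * f z) * \<bar>v z\<bar> ^ CARD('n) * \<bar>w z\<bar>)"
    using v by (auto simp: d_def indicator_def abs_of_nonpos ac_simps intro!: Bochner_Integration.integral_cong)
  also have "(LINT z|lborel. (indicator \<Omega> z * f z) * \<bar>v z\<bar> ^ CARD('n) * \<bar>w z\<bar>)
      \<le> Lnorm \<Omega> f v ^ CARD('n) * Lnorm \<Omega> f w"
    using assms Lnorm_power[OF f]
    by (intro Holder_inequality_nat[where w="\<lambda>z. indicator \<Omega> z * f z"]) (auto simp: indicator_def)
  finally show ?thesis
    using \<open>0 \<le> c\<close> by (simp add: d_def divide_right_mono mult_left_mono)
qed

lemma energy_ratio_density_le:
  fixes \<Omega> :: "(complex^'n) set" and f v w :: "complex^'n \<Rightarrow> real"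
  assumes "open \<Omega>" "continuous_on \<Omega> f" "continuous_on \<Omega> v"
    and f: "\<And>z. z \<in> \<Omega> \<Longrightarrow> 0 \<le> f z" and v: "\<And>z. z \<in> \<Omega> \<Longrightarrow> v z \<le> 0" and "0 \<le> E"
  shows "energy (density lborel (\<lambda>z. ennreal (indicator \<Omega> z * (E / I_mu \<Omega> f v) * (- v z) ^ CARD('n) * f z))) w
      / Lnorm \<Omega> f w \<le> E / Lnorm \<Omega> f v"
proof -
  define N where "N = real CARD('n) + 1"
  have "0 < N"
    by (simp add: N_def)
  define c where "c = E / I_mu \<Omega> f v"
  define E' where "E' = energy (density lborel (\<lambda>z. ennreal (indicator \<Omega> z * c * (- v z) ^ CARD('n) * f z))) w"
  have I: "I_mu \<Omega> f v = Lnorm \<Omega> f v ^ (CARD('n) + 1) / N"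
    unfolding N_def using f v by (rule I_mu_eq_Lnorm_power)
  have "0 \<le> c"
    using \<open>0 \<le> E\<close> by (simp add: c_def I N_def Lnorm_nonneg)
  consider "Lnorm \<Omega> f w = 0" | "Lnorm \<Omega> f v = 0" | "0 < Lnorm \<Omega> f v" "0 < Lnorm \<Omega> f w"
    using Lnorm_nonneg by (metis less_eq_real_def)
  then have "E' / Lnorm \<Omega> f w \<le> E / Lnorm \<Omega> f v"
  proof cases
    case 1
    then show ?thesis
      using \<open>0 \<le> E\<close> Lnorm_nonneg[of \<Omega> f v] by simp
  next
    case 2
    \<comment> \<open>then I_mu vanishes, and x / 0 = 0 turns the density into zero\<close>
    then have "c = 0"
      by (simp add: c_def I)
    then have "E' \<le> 0"
      using energy_density_le[of "\<lambda>_. 0" lborel w] by (simp add: E'_def)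
    then show ?thesis
      using 2 Lnorm_nonneg[of \<Omega> f w] by (simp add: divide_nonpos_nonneg)
  next
    case 3
    have "E' \<le> c * (Lnorm \<Omega> f v ^ CARD('n) * Lnorm \<Omega> f w) / N"
      unfolding E'_def N_def using assms \<open>0 \<le> c\<close> 3 by (intro energy_density_le_Lnorm)
    also have "\<dots> = E * Lnorm \<Omega> f w / Lnorm \<Omega> f v"
      using 3 \<open>0 < N\<close> by (simp add: c_def I field_simps)
    finally show ?thesis
      using 3 by (simp add: field_simps)
  qed
  then show ?thesis
    by (simp add: E'_def c_def)
qed

theorem lemma3p4:
  fixes \<Omega> :: "(complex^'n) set"
    and f :: "complex^'n \<Rightarrow> real"
    and u :: "nat \<Rightarrow> complex^'n \<Rightarrow> real"
    and \<nu> :: "nat \<Rightarrow> (complex^'n) measure"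
    and k :: nat
  assumes spc: "strictly_pseudoconvex \<Omega>"
    and f_smooth: "\<exists>V g. open V \<and> closure \<Omega> \<subseteq> V \<and> smooth_on V g \<and> (\<forall>z\<in>closure \<Omega>. g z = f z)"
    and f_pos: "\<forall>z\<in>closure \<Omega>. f z > 0"
    and MA: "\<And>j. MA_measure \<Omega> (u j) (\<nu> j)"
    and u0_psh: "psh \<Omega> (u 0)"
    and u0_lip: "\<exists>C. C-lipschitz_on (closure \<Omega>) (u 0)"
    and u0_bdry: "\<forall>z\<in>frontier \<Omega>. u 0 z \<le> 0"
    and u0_MA: "\<forall>A\<in>sets lborel.
        emeasure (density lborel (\<lambda>z. ennreal (indicator \<Omega> z * f z))) A \<le> emeasure (\<nu> 0) A"
    and u0_fin: "emeasure (\<nu> 0) \<Omega> < \<infinity>"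
    and step_psh: "\<And>j. psh \<Omega> (u (Suc j))"
    and step_cont: "\<And>j. continuous_on (closure \<Omega>) (u (Suc j))"
    and step_bdry: "\<And>j. \<forall>z\<in>frontier \<Omega>. u (Suc j) z = 0"
    and step_eq: "\<And>j. \<nu> (Suc j) = density lborel (\<lambda>z. ennreal (indicator \<Omega> z *
        (energy (\<nu> j) (u j) / I_mu \<Omega> f (u j)) * (- u j z) ^ CARD('n) * f z))"
  shows "energy (\<nu> (Suc k)) (u (Suc k)) / Lnorm \<Omega> f (u (Suc k))
           \<le> energy (\<nu> k) (u k) / Lnorm \<Omega> f (u k)"
proof -
  have "open \<Omega>" "bounded \<Omega>"
    using spc by (auto simp: strictly_pseudoconvex_def)
  obtain V g where "closure \<Omega> \<subseteq> V" "smooth_on V g" "\<forall>z\<in>closure \<Omega>. g z = f z"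
    using f_smooth by blast
  then have f_cont: "continuous_on \<Omega> f"
    using closure_subset by (intro continuous_on_smooth_extension[of \<Omega> V g]) auto
  have u_cont: "continuous_on (closure \<Omega>) (u j)" for j
  proof (cases j)
    case 0
    then show ?thesis
      using u0_lip lipschitz_on_continuous_on by blast
  qed (use step_cont in simp)
  have u_nonpos: "u j z \<le> 0" if "z \<in> \<Omega>" for j z
  proof -
    have "psh \<Omega> (u j)" "\<And>z. z \<in> frontier \<Omega> \<Longrightarrow> u j z \<le> 0"
      using u0_psh step_psh u0_bdry step_bdry by (cases j; simp)+
    then show ?thesis
      using psh_maximum_principle[OF \<open>bounded \<Omega>\<close> \<open>open \<Omega>\<close> _ u_cont _ that] by blast
  qed
  have f_nonneg: "0 \<le> f z" if "z \<in> \<Omega>" for z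
    using f_pos that closure_subset[of \<Omega>] by (auto intro: less_imp_le)
  have "continuous_on \<Omega> (u k)"
    using u_cont closure_subset continuous_on_subset by blast
  have "sets (\<nu> k) = sets lborel" "emeasure (\<nu> k) (UNIV - \<Omega>) = 0"
    using MA[of k] by (simp_all add: MA_measure_def)
  then have "0 \<le> energy (\<nu> k) (u k)"
    using \<open>open \<Omega>\<close> by (intro energy_nonneg u_nonpos) auto
  from energy_ratio_density_le[OF \<open>open \<Omega>\<close> f_cont \<open>continuous_on \<Omega> (u k)\<close> f_nonneg u_nonpos this]
  show ?thesis
    unfolding step_eq .
qed

end
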